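(* Let $\lambda,\sigma_1,\sigma_2\in\mathbb{C}^*$ and $\eta_1,\eta_2\in\mathbb{C}$. Write $\Omega(\lambda,\eta_1,\sigma_1,0)=\mathbb{C}[X,Y]$ and $\Omega(\lambda,\eta_2,\sigma_2,0)=\mathbb{C}[X_1,Y_1]$, and let $W=\mathrm{span}\{\sum_{t=0}^{j}\binom{j}{t}X^iY^{j-t}\otimes X_1^kY_1^t\mid i,j,k\in\mathbb{N}\}$, a nonzero proper subspace of $\Omega(\lambda,\eta_1,\sigma_1,0)\otimes\Omega(\lambda,\eta_2,\sigma_2,0)$. Then $W$ is a nonzero proper $\mathcal{G}$-submodule of $\Omega(\lambda,\eta_1,\sigma_1,0)\otimes\Omega(\lambda,\eta_2,\sigma_2,0)$.
   Context: The planar Galilean conformal algebra $\mathcal{G}$ is the complex Lie algebra with basis $\{L_m,H_m,I_m,J_m\mid m\in\mathbb{Z}\}$ and brackets $[L_m,L_n]=(n-m)L_{m+n}$, $[L_m,H_n]=nH_{m+n}$, $[L_m,I_n]=(n-m)I_{m+n}$, $[L_m,J_n]=(n-m)J_{m+n}$, $[H_m,I_n]=I_{m+n}$, $[H_m,J_n]=-J_{m+n}$, and $[H_m,H_n]=[I_m,I_n]=[J_m,J_n]=[I_m,J_n]=0$ for all $m,n\in\mathbb{Z}$. For $\lambda,\sigma\in\mathbb{C}^*$, $\eta\in\mathbb{C}$, the module $\Omega(\lambda,\eta,\sigma,0)$ is a polynomial algebra in two variables $X,Y$ with $L_m f(X,Y)=\lambda^m(Y-mX+m\eta)f(X,Y-m)$,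 $H_m f(X,Y)=\lambda^m X f(X,Y-m)$, $I_m f(X,Y)=\lambda^m\sigma f(X-1,Y-m)$, $J_m f(X,Y)=0$. The tensor product has action $x(v\otimes w)=xv\otimes w+v\otimes xw$. $\mathbb{N}$ denotes non-negative integers. *)

theory Defs
  imports Complex_Main
begin

text \<open>The tensor product C[X,Y] (x) C[X1,Y1] is identified with C[X,Y,X1,Y1]
 via f (x) g |-> f(X,Y) g(X1,Y1); polynomials over C are represented faithfully
 by their polynomial functions C^4 -> C (C is infinite).  A point is (X,Y,X1,Y1).\<close>

type_synonym pt = "complex \<times> complex \<times> complex \<times> complex"
type_synonym tfun = "pt \<Rightarrow> complex"

definition cspan :: "tfun set \<Rightarrow> tfun set" where
  "cspan A = {f. \<exists>S c. finite S \<and> S \<subseteq> A \<and> f = (\<lambda>p. \<Sum>v\<in>S. c v * v p)}"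

definition monomial4 :: "nat \<Rightarrow> nat \<Rightarrow> nat \<Rightarrow> nat \<Rightarrow> tfun" where
  "monomial4 i j k l = (\<lambda>(x, y, x1, y1). x ^ i * y ^ j * x1 ^ k * y1 ^ l)"

definition tensor_space :: "tfun set" where
  "tensor_space = cspan {monomial4 i j k l | i j k l. True}"

definition wgen :: "nat \<Rightarrow> nat \<Rightarrow> nat \<Rightarrow> tfun" where
  "wgen i j k = (\<lambda>(x, y, x1, y1).
     \<Sum>t = 0..j. of_nat (j choose t) * x ^ i * y ^ (j - t) * x1 ^ k * y1 ^ t)"

definition Wsub :: "tfun set" where
  "Wsub = cspan {wgen i j k | i j k. True}"

text \<open>Basis of the planar Galilean conformal algebra.\<close>
datatype gca_basis = L int | H int | I int | J int

fun omega_act :: "complex \<Rightarrow> complex \<Rightarrow> complex \<Rightarrow> gca_basis \<Rightarrow>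
    (complex \<Rightarrow> complex \<Rightarrow> complex) \<Rightarrow> (complex \<Rightarrow> complex \<Rightarrow> complex)" where
  "omega_act lam eta sig (L m) f = (\<lambda>x y. lam powi m * (y - of_int m * x + of_int m * eta) * f x (y - of_int m))"
| "omega_act lam eta sig (H m) f = (\<lambda>x y. lam powi m * x * f x (y - of_int m))"
| "omega_act lam eta sig (I m) f = (\<lambda>x y. lam powi m * sig * f (x - 1) (y - of_int m))"
| "omega_act lam eta sig (J m) f = (\<lambda>x y. 0)"

text \<open>Action on the tensor product: x(v(x)w) = xv(x)w + v(x)xw, i.e. the first
 module acts in the variables (X,Y), the second in (X1,Y1).\<close>
definition tensor_act :: "complex \<Rightarrow> complex \<Rightarrow> complex \<Rightarrow> complex \<Rightarrow> complex \<Rightarrow>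
    gca_basis \<Rightarrow> tfun \<Rightarrow> tfun" where
  "tensor_act lam eta1 sig1 eta2 sig2 g F = (\<lambda>(x, y, x1, y1).
      omega_act lam eta1 sig1 g (\<lambda>a b. F (a, b, x1, y1)) x y
    + omega_act lam eta2 sig2 g (\<lambda>a b. F (x, y, a, b)) x1 y1)"

text \<open>G-submodule of the tensor product: a complex subspace stable under the
 action of every basis element (hence of all of G, by linearity).\<close>
definition is_submodule :: "complex \<Rightarrow> complex \<Rightarrow> complex \<Rightarrow> complex \<Rightarrow> complex \<Rightarrow>
    tfun set \<Rightarrow> bool" where
  "is_submodule lam eta1 sig1 eta2 sig2 U \<longleftrightarrow>
     U \<subseteq> tensor_space \<and> (\<lambda>p. 0) \<in> U \<and>
     (\<forall>F\<in>U. \<forall>G\<in>U. (\<lambda>p. F p + G p) \<in> U) \<and>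
     (\<forall>c. \<forall>F\<in>U. (\<lambda>p. c * F p) \<in> U) \<and>
     (\<forall>g. \<forall>F\<in>U. tensor_act lam eta1 sig1 eta2 sig2 g F \<in> U)"

end

theory Submission
  imports Defs
begin

text \<open>By the binomial theorem the generator of \<open>W\<close> indexed by \<open>(i, j, k)\<close> is
  \<open>X\<^sup>i X\<^sub>1\<^sup>k (Y + Y\<^sub>1)\<^sup>j\<close>, so \<open>W = \<complex>[X, X\<^sub>1, Y + Y\<^sub>1]\<close>: the polynomials that depend on
  \<open>Y\<close> and \<open>Y\<^sub>1\<close> only through \<open>Y + Y\<^sub>1\<close>.  Every basis element of \<open>\<G>\<close> shifts \<open>Y\<close> and \<open>Y\<^sub>1\<close> by
  the same integer \<open>m\<close>, and after this common shift the two summands of the tensor action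
  combine into a coefficient that is again a function of \<open>X\<close>, \<open>X\<^sub>1\<close> and \<open>Y + Y\<^sub>1\<close>; e.g.
  \<open>L\<^sub>m\<close> contributes \<open>Y + Y\<^sub>1 - m(X + X\<^sub>1) + m(\<eta>\<^sub>1 + \<eta>\<^sub>2)\<close>.  Hence \<open>W\<close> is a submodule; it
  contains \<open>1\<close> but not \<open>Y\<close>.\<close>

definition fun_subspace :: "tfun set \<Rightarrow> bool" where
  "fun_subspace U \<longleftrightarrow> (\<lambda>p. 0) \<in> U \<and> (\<forall>f\<in>U. \<forall>g\<in>U. (\<lambda>p. f p + g p) \<in> U) \<and>
     (\<forall>c. \<forall>f\<in>U. (\<lambda>p. c * f p) \<in> U)"

lemma fun_subspace_sum:
  assumes "fun_subspace U" "finite S" "\<And>i. i \<in> S \<Longrightarrow> f i \<in> U"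
  shows "(\<lambda>p. \<Sum>i\<in>S. f i p) \<in> U"
  using assms(2,3)
proof (induction S rule: finite_induct)
  case empty
  then show ?case using assms(1) by (simp add: fun_subspace_def)
next
  case (insert a S)
  then show ?case using assms(1) unfolding fun_subspace_def by simp
qed

lemma cspan_add:
  assumes "f \<in> cspan A" "g \<in> cspan A"
  shows "(\<lambda>p. f p + g p) \<in> cspan A"
proof -
  obtain S c where S: "finite S" "S \<subseteq> A" "f = (\<lambda>p. \<Sum>v\<in>S. c v * v p)"
    using assms(1) unfolding cspan_def by blast
  obtain T d where T: "finite T" "T \<subseteq> A" "g = (\<lambda>p. \<Sum>v\<in>T. d v * v p)"
    using assms(2) unfolding cspan_def by blast
  define c' d' where "c' v = (if v \<in> S then c v else 0)"
    and "d' v = (if v \<in> T then d v else 0)" for v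
  have "f p = (\<Sum>v\<in>S \<union> T. c' v * v p)" for p
    unfolding S(3) using S(1) T(1) by (intro sum.mono_neutral_cong_left) (auto simp: c'_def)
  moreover have "g p = (\<Sum>v\<in>S \<union> T. d' v * v p)" for p
    unfolding T(3) using S(1) T(1) by (intro sum.mono_neutral_cong_left) (auto simp: d'_def)
  ultimately have "(\<lambda>p. f p + g p) = (\<lambda>p. \<Sum>v\<in>S \<union> T. (c' v + d' v) * v p)"
    by (simp add: sum.distrib distrib_right)
  with S(1,2) T(1,2) show ?thesis
    unfolding cspan_def
    by (intro CollectI exI[of _ "S \<union> T"] exI[of _ "\<lambda>v. c' v + d' v"]) simp
qed

lemma cspan_zero: "(\<lambda>p. 0) \<in> cspan A"
  unfolding cspan_def by (intro CollectI exI[of _ "{}"]) simp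

lemma cspan_scale:
  assumes "f \<in> cspan A"
  shows "(\<lambda>p. c * f p) \<in> cspan A"
proof -
  obtain S d where "finite S" "S \<subseteq> A" "f = (\<lambda>p. \<Sum>v\<in>S. d v * v p)"
    using assms unfolding cspan_def by blast
  then show ?thesis unfolding cspan_def
    by (intro CollectI exI[of _ S] exI[of _ "\<lambda>v. c * d v"])
       (simp add: sum_distrib_left mult.assoc)
qed

lemma fun_subspace_cspan: "fun_subspace (cspan A)"
  unfolding fun_subspace_def using cspan_zero cspan_add cspan_scale by blast

lemma cspan_superset: "A \<subseteq> cspan A"
proof
  fix v assume "v \<in> A"
  then show "v \<in> cspan A"
    unfolding cspan_def by (intro CollectI exI[of _ "{v}"] exI[of _ "\<lambda>_. 1"]) simp
qed

lemma cspan_minimal: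
  assumes "fun_subspace U" "A \<subseteq> U"
  shows "cspan A \<subseteq> U"
proof
  fix f assume "f \<in> cspan A"
  then obtain S c where "finite S" "S \<subseteq> A" "f = (\<lambda>p. \<Sum>v\<in>S. c v * v p)"
    unfolding cspan_def by blast
  with assms show "f \<in> U"
    by (auto intro!: fun_subspace_sum simp: fun_subspace_def)
qed

lemma monomial4_in_tensor_space: "monomial4 i j k l \<in> tensor_space"
  unfolding tensor_space_def by (rule subsetD[OF cspan_superset]) blast

lemma fun_subspace_tensor_space: "fun_subspace tensor_space"
  unfolding tensor_space_def by (rule fun_subspace_cspan)

lemma tensor_space_add:
  "f \<in> tensor_space \<Longrightarrow> g \<in> tensor_space \<Longrightarrow> (\<lambda>p. f p + g p) \<in> tensor_space"
  using fun_subspace_tensor_space by (simp add: fun_subspace_def)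

lemma tensor_space_scale: "f \<in> tensor_space \<Longrightarrow> (\<lambda>p. c * f p) \<in> tensor_space"
  using fun_subspace_tensor_space by (simp add: fun_subspace_def)

lemma tensor_space_diff:
  "f \<in> tensor_space \<Longrightarrow> g \<in> tensor_space \<Longrightarrow> (\<lambda>p. f p - g p) \<in> tensor_space"
  using tensor_space_add[of f "\<lambda>p. (-1) * g p"] tensor_space_scale[of g "-1"] by simp

lemma tensor_space_const: "(\<lambda>p. c) \<in> tensor_space"
  using tensor_space_scale[OF monomial4_in_tensor_space[of 0 0 0 0], of c]
  by (simp add: monomial4_def case_prod_unfold)

lemma tensor_space_coordinates:
  "fst \<in> tensor_space" "(\<lambda>p. fst (snd p)) \<in> tensor_space"
  "(\<lambda>p. fst (snd (snd p))) \<in> tensor_space" "(\<lambda>p. snd (snd (snd p))) \<in> tensor_space"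
  using monomial4_in_tensor_space[of 1 0 0 0] monomial4_in_tensor_space[of 0 1 0 0]
    monomial4_in_tensor_space[of 0 0 1 0] monomial4_in_tensor_space[of 0 0 0 1]
  by (simp_all add: monomial4_def case_prod_unfold fun_eq_iff)

lemma tensor_space_induct [consumes 1, case_names subspace monomial]:
  assumes "F \<in> tensor_space" "fun_subspace {F. P F}" "\<And>i j k l. P (monomial4 i j k l)"
  shows "P F"
proof -
  have "tensor_space \<subseteq> {F. P F}"
    unfolding tensor_space_def using assms(2,3) by (intro cspan_minimal) auto
  with assms(1) show ?thesis by blast
qed

lemma monomial4_mult:
  "(\<lambda>p. monomial4 i j k l p * monomial4 i' j' k' l' p) =
     monomial4 (i + i') (j + j') (k + k') (l + l')"
  by (auto simp: monomial4_def power_add)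

lemma tensor_space_mult:
  assumes "f \<in> tensor_space" "g \<in> tensor_space"
  shows "(\<lambda>p. f p * g p) \<in> tensor_space"
  using assms(1)
proof (induction rule: tensor_space_induct)
  case subspace
  show ?case
    using tensor_space_add tensor_space_scale tensor_space_const[of 0]
    by (auto simp: fun_subspace_def distrib_right mult.assoc)
next
  case (monomial i j k l)
  show ?case
    using assms(2)
  proof (induction rule: tensor_space_induct)
    case subspace
    show ?case
      using tensor_space_add tensor_space_scale tensor_space_const[of 0]
      by (auto simp: fun_subspace_def distrib_left mult.left_commute)
  next
    case (monomial i' j' k' l')
    show ?case
      unfolding monomial4_mult by (rule monomial4_in_tensor_space)
  qed
qed

lemma tensor_space_power: "f \<in> tensor_space \<Longrightarrow> (\<lambda>p. f p ^ n) \<in> tensor_space"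
  by (induction n) (simp_all add: tensor_space_const tensor_space_mult)

lemma tensor_space_comp:
  assumes "F \<in> tensor_space"
    and "a \<in> tensor_space" "b \<in> tensor_space" "c \<in> tensor_space" "d \<in> tensor_space"
  shows "(\<lambda>p. F (a p, b p, c p, d p)) \<in> tensor_space"
  using assms(1)
proof (induction rule: tensor_space_induct)
  case subspace
  show ?case
    using fun_subspace_tensor_space by (simp add: fun_subspace_def)
next
  case (monomial i j k l)
  show ?case
    using assms(2-5) by (simp add: monomial4_def tensor_space_mult tensor_space_power)
qed

definition depends_on_Y_sum :: "tfun \<Rightarrow> bool" where
  "depends_on_Y_sum F \<longleftrightarrow> (\<exists>G. F = (\<lambda>(x, y, x1, y1). G x (y + y1) x1))"

lemma depends_on_Y_sum_iff:
  "depends_on_Y_sum F \<longleftrightarrow> (\<forall>x y x1 y1. F (x, y, x1, y1) = F (x, y + y1, x1, 0))"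
proof
  assume "depends_on_Y_sum F"
  then show "\<forall>x y x1 y1. F (x, y, x1, y1) = F (x, y + y1, x1, 0)"
    by (auto simp: depends_on_Y_sum_def)
next
  assume "\<forall>x y x1 y1. F (x, y, x1, y1) = F (x, y + y1, x1, 0)"
  then have "F = (\<lambda>(x, y, x1, y1). F (x, y + y1, x1, 0))" by (auto simp: fun_eq_iff)
  then show "depends_on_Y_sum F"
    unfolding depends_on_Y_sum_def by (intro exI[of _ "\<lambda>x s x1. F (x, s, x1, 0)"])
qed

lemma fun_subspace_depends_on_Y_sum: "fun_subspace {F. depends_on_Y_sum F}"
  by (auto simp: fun_subspace_def depends_on_Y_sum_iff)

lemma wgen_eq: "wgen i j k = (\<lambda>(x, y, x1, y1). x ^ i * x1 ^ k * (y + y1) ^ j)"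
proof (intro ext, clarify)
  fix x y x1 y1 :: complex
  have "x ^ i * x1 ^ k * (y + y1) ^ j
      = (\<Sum>t = 0..j. x ^ i * x1 ^ k * (of_nat (j choose t) * y1 ^ t * y ^ (j - t)))"
    using binomial_ring[of y1 y j] by (simp add: add.commute atLeast0AtMost sum_distrib_left)
  also have "\<dots> = wgen i j k (x, y, x1, y1)"
    unfolding wgen_def by (simp add: mult_ac)
  finally show "wgen i j k (x, y, x1, y1) = x ^ i * x1 ^ k * (y + y1) ^ j" ..
qed

lemma Wsub_eq: "Wsub = {F \<in> tensor_space. depends_on_Y_sum F}"
proof
  have "wgen i j k \<in> tensor_space" for i j k
    unfolding wgen_eq case_prod_unfold
    by (intro tensor_space_mult tensor_space_power tensor_space_add tensor_space_coordinates)
  moreover have "depends_on_Y_sum (wgen i j k)" for i j k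
    unfolding wgen_eq depends_on_Y_sum_def
    by (intro exI[of _ "\<lambda>x s x1. x ^ i * x1 ^ k * s ^ j"]) simp
  moreover have "fun_subspace {F \<in> tensor_space. depends_on_Y_sum F}"
    using fun_subspace_tensor_space fun_subspace_depends_on_Y_sum by (simp add: fun_subspace_def)
  ultimately show "Wsub \<subseteq> {F \<in> tensor_space. depends_on_Y_sum F}"
    unfolding Wsub_def by (intro cspan_minimal) auto
next
  show "{F \<in> tensor_space. depends_on_Y_sum F} \<subseteq> Wsub"
  proof clarify
    fix F assume "F \<in> tensor_space" "depends_on_Y_sum F"
    \<comment> \<open>\<open>merge_Y\<close> fixes \<open>F\<close> and maps \<open>X\<^sup>i Y\<^sup>j X\<^sub>1\<^sup>k Y\<^sub>1\<^sup>l\<close> to \<open>0\<^sup>l\<close> times a generator of \<open>W\<close>.\<close>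
    define merge_Y where "merge_Y G = (\<lambda>(x, y, x1, y1). G (x, y + y1, x1, 0))" for G :: tfun
    have "merge_Y F \<in> Wsub"
      using \<open>F \<in> tensor_space\<close>
    proof (induction rule: tensor_space_induct)
      case subspace
      show ?case
        using fun_subspace_cspan[of "{wgen i j k | i j k. True}"]
        by (simp add: fun_subspace_def merge_Y_def case_prod_unfold Wsub_def)
    next
      case (monomial i j k l)
      have "merge_Y (monomial4 i j k l) = (\<lambda>p. 0 ^ l * wgen i j k p)"
        by (auto simp: merge_Y_def monomial4_def wgen_eq mult_ac)
      moreover have "(\<lambda>p. 0 ^ l * wgen i j k p) \<in> Wsub"
        unfolding Wsub_def by (intro cspan_scale subsetD[OF cspan_superset]) blast
      ultimately show ?case by simp
    qed
    moreover have "merge_Y F = F"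
      using \<open>depends_on_Y_sum F\<close> by (auto simp: merge_Y_def depends_on_Y_sum_iff)
    ultimately show "F \<in> Wsub" by simp
  qed
qed

lemma tensor_act_tensor_space:
  "F \<in> tensor_space \<Longrightarrow> tensor_act lam eta1 sig1 eta2 sig2 g F \<in> tensor_space"
  \<comment> \<open>\<open>tensor_space_comp\<close> must come last: it unifies with every goal.\<close>
  by (cases g; simp add: tensor_act_def case_prod_unfold del: prod.collapse;
      intro tensor_space_const tensor_space_coordinates tensor_space_add tensor_space_mult
        tensor_space_diff tensor_space_comp)

lemma tensor_act_depends_on_Y_sum:
  assumes "depends_on_Y_sum F"
  shows "depends_on_Y_sum (tensor_act lam eta1 sig1 eta2 sig2 g F)"
proof -
  obtain G where "F = (\<lambda>(x, y, x1, y1). G x (y + y1) x1)"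
    using assms unfolding depends_on_Y_sum_def by blast
  then show ?thesis
    by (cases g) (simp_all add: depends_on_Y_sum_iff tensor_act_def algebra_simps)
qed

lemma is_submodule_iff:
  "is_submodule lam eta1 sig1 eta2 sig2 U \<longleftrightarrow>
     U \<subseteq> tensor_space \<and> fun_subspace U \<and> (\<forall>g. \<forall>F\<in>U. tensor_act lam eta1 sig1 eta2 sig2 g F \<in> U)"
  unfolding is_submodule_def fun_subspace_def by blast

theorem proposition4p4:
  fixes lam sig1 sig2 eta1 eta2 :: complex
  assumes "lam \<noteq> 0" and "sig1 \<noteq> 0" and "sig2 \<noteq> 0"
  shows "is_submodule lam eta1 sig1 eta2 sig2 Wsub \<and>
         (\<exists>F\<in>Wsub. F \<noteq> (\<lambda>p. 0)) \<and> Wsub \<noteq> tensor_space"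
proof (intro conjI)
  have "Wsub \<subseteq> tensor_space"
    unfolding Wsub_eq by blast
  moreover have "fun_subspace Wsub"
    unfolding Wsub_def by (rule fun_subspace_cspan)
  moreover have "tensor_act lam eta1 sig1 eta2 sig2 g F \<in> Wsub" if "F \<in> Wsub" for g F
    using that by (simp add: Wsub_eq tensor_act_tensor_space tensor_act_depends_on_Y_sum)
  ultimately show "is_submodule lam eta1 sig1 eta2 sig2 Wsub"
    by (simp add: is_submodule_iff)
  have "wgen 0 0 0 \<in> Wsub"
    unfolding Wsub_def by (rule subsetD[OF cspan_superset]) blast
  moreover have "wgen 0 0 0 (0, 0, 0, 0) \<noteq> 0"
    by (simp add: wgen_def)
  ultimately show "\<exists>F\<in>Wsub. F \<noteq> (\<lambda>p. 0)" by force
  have "monomial4 0 1 0 0 (0, 0, 0, 1) \<noteq> monomial4 0 1 0 0 (0, 0 + 1, 0, 0)"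
    by (simp add: monomial4_def)
  then have "monomial4 0 1 0 0 \<notin> Wsub"
    unfolding Wsub_eq depends_on_Y_sum_iff by blast
  then show "Wsub \<noteq> tensor_space"
    using monomial4_in_tensor_space by blast
qed

end
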